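(* Let $\theta$ be an ordered partial action of an inverse semigroupoid $\mathcal{S}$ on a partially ordered set $X$, and let $(\eta,E,i)$ be the ordered globalization given by the globalization construction with the induced order on $E$. Then for every ordered global action $\zeta=(\{F_s\},\{\zeta_s\})$ of $\mathcal{S}$ on a poset $F$ and every ordered $\mathcal{S}$-equivariant map $j:X\to F$, there exists a unique ordered $\mathcal{S}$-equivariant map $k:E\to F$ with $k\circ i=j$; it is given by $k([s,x])=\zeta_s(j(x))$.
   Context: Inverse semigroupoid: arrows $\mathcal{S}$, objects $\mathcal{S}^{(0)}$, maps $d,c$, associative multiplication on $\mathcal{S}^{(2)}=\{(s,t):d(s)=c(t)\}$ with $d(st)=d(t)$, $c(st)=c(s)$, and unique $s^*$ with $ss^*s=s$, $s^*ss^*=s^*$; $E(\mathcal{S})$ = idempotents; natural partial order $s\leqslant t$ (for parallel $s,t$) iff $s=te$ for an idempotent $e$ with $(t,e)\in\mathcal{S}^{(2)}$. A partial action of $\mathcal{S}$ on a set $X$ is a pair $(\{X_s\},\{\theta_s\})$ of subsets $X_s\subseteq X$ and maps $\theta_s:X_{s^*}\to X_s$ such that: each $\theta_s$ is a bijection with $\theta_s^{-1}=\theta_{s^*}$ and $X=\bigcup_s X_s$; $\theta_s\circ\theta_t\subseteq\theta_{st}$ as partial maps for $(s,t)\in\mathcal{S}^{(2)}$; $X_s\subseteq X_t$ whenever $s\leqslant t$. It is global if $\theta_s\circ\theta_t=\theta_{st}$ for all $(s,t)\in\mathcal{S}^{(2)}$. When $X$ is a poset, it is an ordered partial action if each $X_s$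 is an order ideal of $X$ and each $\theta_s$ is an order isomorphism. A map $\varphi:X\to Y$ between sets with partial actions $\theta^X,\theta^Y$ is $\mathcal{S}$-equivariant if $\varphi(X_s)\subseteq Y_s$ and $\varphi(\theta^X_s(x))=\theta^Y_s(\varphi(x))$ for $x\in X_{s^*}$; it is ordered $\mathcal{S}$-equivariant if moreover order preserving. Globalization construction: let $D=\{(s,x)\in\mathcal{S}\times X: x\in X_{s^*s}\}$. Define $(s,x)\sim(t,y)$ on $D$ iff either (R1) $(t^*,s)\in\mathcal{S}^{(2)}$, $x\in X_{s^*t}$ and $\theta_{t^*s}(x)=y$; or (R2) $s,t\in E(\mathcal{S})$ and $x=y$. Let $\approx$ be the equivalence relation on $D$ generated by $\sim$, $E=D/{\approx}$, and $[s,x]$ the class of $(s,x)$. For $s\in\mathcal{S}$ put $D_s=\{(p,x)\in D:(s^*,p)\in\mathcal{S}^{(2)},\ x\in X_{p^*ss^*p}\}$, $E_s=\{[p,x]:(p,x)\in D_s\}$, and $\eta_s:E_{s^*}\to E_s$, $\eta_s([p,x])=[sp,x]$ for $(p,x)\in D_{s^*}$. Define $i:X\to E$ by $i(x)=[e,x]$ for any $e\in E(\mathcal{S})$ with $x\in X_e$. The order on $E$: $[s,x]\leqslant[t,y]$ iff there exist $(r,y')\in D$ and $x'\in X$ with $(r,y')\approx(t,y)$, $x'\leqslant y'$, $(r,x')\approx(s,x)$; with it $\eta$ is an ordered global action. *)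

theory Defs
  imports Main
begin

record ('s, 'o) semigroupoid =
  arr :: "'s set"
  dm  :: "'s \<Rightarrow> 'o"
  cd  :: "'s \<Rightarrow> 'o"
  mul :: "'s \<Rightarrow> 's \<Rightarrow> 's"
  sinv :: "'s \<Rightarrow> 's"

definition composable :: "('s, 'o, 'z) semigroupoid_scheme \<Rightarrow> 's \<Rightarrow> 's \<Rightarrow> bool" where
  "composable S s t \<longleftrightarrow> s \<in> arr S \<and> t \<in> arr S \<and> dm S s = cd S t"

definition inverse_semigroupoid :: "('s, 'o, 'z) semigroupoid_scheme \<Rightarrow> bool" where
  "inverse_semigroupoid S \<longleftrightarrow>
     (\<forall>s t. composable S s t \<longrightarrow>
        mul S s t \<in> arr S \<and> dm S (mul S s t) = dm S t \<and> cd S (mul S s t) = cd S s) \<and>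
     (\<forall>r s t. composable S r s \<and> composable S s t \<longrightarrow>
        mul S (mul S r s) t = mul S r (mul S s t)) \<and>
     (\<forall>s \<in> arr S. sinv S s \<in> arr S \<and> dm S (sinv S s) = cd S s \<and> cd S (sinv S s) = dm S s \<and>
        mul S (mul S s (sinv S s)) s = s \<and>
        mul S (mul S (sinv S s) s) (sinv S s) = sinv S s \<and>
        (\<forall>t \<in> arr S. dm S t = cd S s \<and> cd S t = dm S s \<and>
           mul S (mul S s t) s = s \<and> mul S (mul S t s) t = t \<longrightarrow> t = sinv S s))"

definition idems :: "('s, 'o, 'z) semigroupoid_scheme \<Rightarrow> 's set" where
  "idems S = {e \<in> arr S. dm S e = cd S e \<and> mul S e e = e}"

definition nat_le :: "('s, 'o, 'z) semigroupoid_scheme \<Rightarrow> 's \<Rightarrow> 's \<Rightarrow> bool" where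
  "nat_le S s t \<longleftrightarrow> s \<in> arr S \<and> t \<in> arr S \<and> dm S s = dm S t \<and> cd S s = cd S t \<and>
     (\<exists>e \<in> idems S. composable S t e \<and> s = mul S t e)"

record ('s, 'x) pact =
  pdom :: "'s \<Rightarrow> 'x set"
  pmap :: "'s \<Rightarrow> 'x \<Rightarrow> 'x"

definition partial_action ::
  "('s, 'o, 'z) semigroupoid_scheme \<Rightarrow> 'x set \<Rightarrow> ('s, 'x) pact \<Rightarrow> bool" where
  "partial_action S X \<theta> \<longleftrightarrow>
     (\<forall>s \<in> arr S. pdom \<theta> s \<subseteq> X) \<and>
     (\<forall>s \<in> arr S. bij_betw (pmap \<theta> s) (pdom \<theta> (sinv S s)) (pdom \<theta> s) \<and>
        (\<forall>x \<in> pdom \<theta> (sinv S s). pmap \<theta> (sinv S s) (pmap \<theta> s x) = x) \<and>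
        (\<forall>y \<in> pdom \<theta> s. pmap \<theta> s (pmap \<theta> (sinv S s) y) = y)) \<and>
     X = (\<Union>s \<in> arr S. pdom \<theta> s) \<and>
     (\<forall>s t. composable S s t \<longrightarrow>
        (\<forall>x \<in> pdom \<theta> (sinv S t). pmap \<theta> t x \<in> pdom \<theta> (sinv S s) \<longrightarrow>
           x \<in> pdom \<theta> (sinv S (mul S s t)) \<and> pmap \<theta> (mul S s t) x = pmap \<theta> s (pmap \<theta> t x))) \<and>
     (\<forall>s t. nat_le S s t \<longrightarrow> pdom \<theta> s \<subseteq> pdom \<theta> t)"

definition global_action ::
  "('s, 'o, 'z) semigroupoid_scheme \<Rightarrow> 'x set \<Rightarrow> ('s, 'x) pact \<Rightarrow> bool" where
  "global_action S X \<theta> \<longleftrightarrow> partial_action S X \<theta> \<and>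
     (\<forall>s t. composable S s t \<longrightarrow>
        {x \<in> pdom \<theta> (sinv S t). pmap \<theta> t x \<in> pdom \<theta> (sinv S s)} = pdom \<theta> (sinv S (mul S s t)) \<and>
        (\<forall>x \<in> pdom \<theta> (sinv S (mul S s t)). pmap \<theta> (mul S s t) x = pmap \<theta> s (pmap \<theta> t x)))"

definition poset_on :: "'x set \<Rightarrow> ('x \<Rightarrow> 'x \<Rightarrow> bool) \<Rightarrow> bool" where
  "poset_on X le \<longleftrightarrow> (\<forall>x \<in> X. le x x) \<and>
     (\<forall>x \<in> X. \<forall>y \<in> X. \<forall>z \<in> X. le x y \<and> le y z \<longrightarrow> le x z) \<and>
     (\<forall>x \<in> X. \<forall>y \<in> X. le x y \<and> le y x \<longrightarrow> x = y)"

definition order_ideal :: "'x set \<Rightarrow> ('x \<Rightarrow> 'x \<Rightarrow> bool) \<Rightarrow> 'x set \<Rightarrow> bool" where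
  "order_ideal X le A \<longleftrightarrow> A \<subseteq> X \<and> (\<forall>x \<in> X. \<forall>y \<in> A. le x y \<longrightarrow> x \<in> A)"

definition ordered_partial_action ::
  "('s, 'o, 'z) semigroupoid_scheme \<Rightarrow> 'x set \<Rightarrow> ('x \<Rightarrow> 'x \<Rightarrow> bool) \<Rightarrow> ('s, 'x) pact \<Rightarrow> bool" where
  "ordered_partial_action S X le \<theta> \<longleftrightarrow> poset_on X le \<and> partial_action S X \<theta> \<and>
     (\<forall>s \<in> arr S. order_ideal X le (pdom \<theta> s)) \<and>
     (\<forall>s \<in> arr S. \<forall>x \<in> pdom \<theta> (sinv S s). \<forall>y \<in> pdom \<theta> (sinv S s).
        le x y \<longleftrightarrow> le (pmap \<theta> s x) (pmap \<theta> s y))"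

definition ordered_global_action ::
  "('s, 'o, 'z) semigroupoid_scheme \<Rightarrow> 'x set \<Rightarrow> ('x \<Rightarrow> 'x \<Rightarrow> bool) \<Rightarrow> ('s, 'x) pact \<Rightarrow> bool" where
  "ordered_global_action S X le \<theta> \<longleftrightarrow> ordered_partial_action S X le \<theta> \<and> global_action S X \<theta>"

definition equivariant ::
  "('s, 'o, 'z) semigroupoid_scheme \<Rightarrow> 'x set \<Rightarrow> ('s, 'x) pact \<Rightarrow> 'y set \<Rightarrow> ('s, 'y) pact
     \<Rightarrow> ('x \<Rightarrow> 'y) \<Rightarrow> bool" where
  "equivariant S X \<theta> Y \<psi> \<phi> \<longleftrightarrow> (\<forall>x \<in> X. \<phi> x \<in> Y) \<and>
     (\<forall>s \<in> arr S. \<phi> ` pdom \<theta> s \<subseteq> pdom \<psi> s) \<and>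
     (\<forall>s \<in> arr S. \<forall>x \<in> pdom \<theta> (sinv S s). \<phi> (pmap \<theta> s x) = pmap \<psi> s (\<phi> x))"

definition ordered_equivariant ::
  "('s, 'o, 'z) semigroupoid_scheme \<Rightarrow> 'x set \<Rightarrow> ('x \<Rightarrow> 'x \<Rightarrow> bool) \<Rightarrow> ('s, 'x) pact
     \<Rightarrow> 'y set \<Rightarrow> ('y \<Rightarrow> 'y \<Rightarrow> bool) \<Rightarrow> ('s, 'y) pact \<Rightarrow> ('x \<Rightarrow> 'y) \<Rightarrow> bool" where
  "ordered_equivariant S X leX \<theta> Y leY \<psi> \<phi> \<longleftrightarrow> equivariant S X \<theta> Y \<psi> \<phi> \<and>
     (\<forall>x \<in> X. \<forall>y \<in> X. leX x y \<longrightarrow> leY (\<phi> x) (\<phi> y))"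

definition glob_D :: "('s, 'o, 'z) semigroupoid_scheme \<Rightarrow> ('s, 'x) pact \<Rightarrow> ('s \<times> 'x) set" where
  "glob_D S \<theta> = {(s, x). s \<in> arr S \<and> x \<in> pdom \<theta> (mul S (sinv S s) s)}"

definition glob_sim :: "('s, 'o, 'z) semigroupoid_scheme \<Rightarrow> ('s, 'x) pact \<Rightarrow> (('s \<times> 'x) \<times> ('s \<times> 'x)) set" where
  "glob_sim S \<theta> = {((s, x), (t, y)). (s, x) \<in> glob_D S \<theta> \<and> (t, y) \<in> glob_D S \<theta> \<and>
      ((composable S (sinv S t) s \<and> x \<in> pdom \<theta> (mul S (sinv S s) t) \<and>
          pmap \<theta> (mul S (sinv S t) s) x = y)
       \<or> (s \<in> idems S \<and> t \<in> idems S \<and> x = y))}"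

definition glob_approx :: "('s, 'o, 'z) semigroupoid_scheme \<Rightarrow> ('s, 'x) pact \<Rightarrow> (('s \<times> 'x) \<times> ('s \<times> 'x)) set" where
  "glob_approx S \<theta> = ((glob_sim S \<theta> \<union> (glob_sim S \<theta>)\<inverse>)\<^sup>*) \<inter> (glob_D S \<theta> \<times> glob_D S \<theta>)"

definition glob_E :: "('s, 'o, 'z) semigroupoid_scheme \<Rightarrow> ('s, 'x) pact \<Rightarrow> ('s \<times> 'x) set set" where
  "glob_E S \<theta> = glob_D S \<theta> // glob_approx S \<theta>"

definition glob_cls :: "('s, 'o, 'z) semigroupoid_scheme \<Rightarrow> ('s, 'x) pact \<Rightarrow> 's \<Rightarrow> 'x \<Rightarrow> ('s \<times> 'x) set" where
  "glob_cls S \<theta> s x = glob_approx S \<theta> `` {(s, x)}"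

definition glob_Ds :: "('s, 'o, 'z) semigroupoid_scheme \<Rightarrow> ('s, 'x) pact \<Rightarrow> 's \<Rightarrow> ('s \<times> 'x) set" where
  "glob_Ds S \<theta> s = {(p, x) \<in> glob_D S \<theta>. composable S (sinv S s) p \<and>
      x \<in> pdom \<theta> (mul S (mul S (mul S (sinv S p) s) (sinv S s)) p)}"

definition glob_Es :: "('s, 'o, 'z) semigroupoid_scheme \<Rightarrow> ('s, 'x) pact \<Rightarrow> 's \<Rightarrow> ('s \<times> 'x) set set" where
  "glob_Es S \<theta> s = {glob_cls S \<theta> p x | p x. (p, x) \<in> glob_Ds S \<theta> s}"

text \<open>\<open>\<eta>_s([p,x]) = [sp,x]\<close> for \<open>(p,x) \<in> D_{s*}\<close> (computed via a chosen representative).\<close>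
definition glob_eta :: "('s, 'o, 'z) semigroupoid_scheme \<Rightarrow> ('s, 'x) pact \<Rightarrow> 's \<Rightarrow> ('s \<times> 'x) set \<Rightarrow> ('s \<times> 'x) set" where
  "glob_eta S \<theta> s A = (let r = (SOME r. r \<in> glob_Ds S \<theta> (sinv S s) \<and> glob_cls S \<theta> (fst r) (snd r) = A)
      in glob_cls S \<theta> (mul S s (fst r)) (snd r))"

definition glob_action :: "('s, 'o, 'z) semigroupoid_scheme \<Rightarrow> ('s, 'x) pact \<Rightarrow> ('s, ('s \<times> 'x) set) pact" where
  "glob_action S \<theta> = \<lparr>pdom = glob_Es S \<theta>, pmap = glob_eta S \<theta>\<rparr>"

definition glob_i :: "('s, 'o, 'z) semigroupoid_scheme \<Rightarrow> ('s, 'x) pact \<Rightarrow> 'x \<Rightarrow> ('s \<times> 'x) set" where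
  "glob_i S \<theta> x = glob_cls S \<theta> (SOME e. e \<in> idems S \<and> x \<in> pdom \<theta> e) x"

definition glob_le :: "('s, 'o, 'z) semigroupoid_scheme \<Rightarrow> 'x set \<Rightarrow> ('x \<Rightarrow> 'x \<Rightarrow> bool) \<Rightarrow> ('s, 'x) pact
    \<Rightarrow> ('s \<times> 'x) set \<Rightarrow> ('s \<times> 'x) set \<Rightarrow> bool" where
  "glob_le S X le \<theta> A B \<longleftrightarrow> (\<exists>s x t y. (s, x) \<in> glob_D S \<theta> \<and> (t, y) \<in> glob_D S \<theta> \<and>
      A = glob_cls S \<theta> s x \<and> B = glob_cls S \<theta> t y \<and>
      (\<exists>r y' x'. (r, y') \<in> glob_D S \<theta> \<and> x' \<in> X \<and>
         ((r, y'), (t, y)) \<in> glob_approx S \<theta> \<and> le x' y' \<and> ((r, x'), (s, x)) \<in> glob_approx S \<theta>))"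

end

theory Submission
  imports Defs
begin

text \<open>Since \<open>[s,x] = \<eta>\<^sub>s(i x)\<close>, an equivariant \<open>k\<close> with \<open>k \<circ> i = j\<close> must send \<open>[s,x]\<close> to
  \<open>\<zeta>\<^sub>s(j x)\<close>; this gives uniqueness. Conversely \<open>\<zeta>\<^sub>s(j x)\<close> is invariant under the generating
  relation \<open>\<sim>\<close> because \<open>\<zeta>\<close> is global, so it defines \<open>k\<close> on \<open>E\<close>; equivariance and monotonicity are
  then checked on representatives, the latter because every \<open>\<zeta>\<^sub>r\<close> is an order isomorphism.
  The real work is that \<open>\<eta>\<^sub>s\<close> is well defined: \<open>\<approx>\<close> is contained in an explicit equivalence
  (R1, or equal images in \<open>X\<close>), and left multiplication by \<open>s\<close> turns this equivalence on \<open>D\<^bsub>s*\<^esub>\<close>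
  into \<open>\<approx>\<close>. The algebra behind it is that idempotents at the same object commute.\<close>

locale inv_semigroupoid =
  fixes S :: "('s, 'o, 'z) semigroupoid_scheme"
  assumes inverse: "inverse_semigroupoid S"
begin

text \<open>Products associate to the right; the simp rule \<open>mul_assoc\<close> normalises to this form.\<close>

abbreviation mult :: "'s \<Rightarrow> 's \<Rightarrow> 's" (infixr "\<cdot>" 70) where "s \<cdot> t \<equiv> mul S s t"
abbreviation star :: "'s \<Rightarrow> 's" ("_\<^sup>\<star>" [1000] 1000) where "s\<^sup>\<star> \<equiv> sinv S s"

lemma mul_closed [simp]: "s \<in> arr S \<Longrightarrow> t \<in> arr S \<Longrightarrow> dm S s = cd S t \<Longrightarrow> s \<cdot> t \<in> arr S"
  and dm_mul [simp]: "s \<in> arr S \<Longrightarrow> t \<in> arr S \<Longrightarrow> dm S s = cd S t \<Longrightarrow> dm S (s \<cdot> t) = dm S t"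
  and cd_mul [simp]: "s \<in> arr S \<Longrightarrow> t \<in> arr S \<Longrightarrow> dm S s = cd S t \<Longrightarrow> cd S (s \<cdot> t) = cd S s"
  using inverse unfolding inverse_semigroupoid_def composable_def by blast+

lemma mul_assoc [simp]:
  "r \<in> arr S \<Longrightarrow> s \<in> arr S \<Longrightarrow> t \<in> arr S \<Longrightarrow> dm S r = cd S s \<Longrightarrow> dm S s = cd S t \<Longrightarrow>
    (r \<cdot> s) \<cdot> t = r \<cdot> s \<cdot> t"
  using inverse unfolding inverse_semigroupoid_def composable_def by blast

lemma sinv_closed [simp]: "s \<in> arr S \<Longrightarrow> s\<^sup>\<star> \<in> arr S"
  and dm_sinv [simp]: "s \<in> arr S \<Longrightarrow> dm S (s\<^sup>\<star>) = cd S s"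
  and cd_sinv [simp]: "s \<in> arr S \<Longrightarrow> cd S (s\<^sup>\<star>) = dm S s"
  using inverse unfolding inverse_semigroupoid_def by blast+

lemma mul_sinv_mul [simp]: "s \<in> arr S \<Longrightarrow> s \<cdot> s\<^sup>\<star> \<cdot> s = s"
  and sinv_mul_sinv [simp]: "s \<in> arr S \<Longrightarrow> s\<^sup>\<star> \<cdot> s \<cdot> s\<^sup>\<star> = s\<^sup>\<star>"
  using inverse unfolding inverse_semigroupoid_def by auto

lemma mul_sinv_mul_left [simp]:
  "s \<in> arr S \<Longrightarrow> t \<in> arr S \<Longrightarrow> dm S s = cd S t \<Longrightarrow> s \<cdot> s\<^sup>\<star> \<cdot> s \<cdot> t = s \<cdot> t"
  using mul_assoc[of s "s\<^sup>\<star> \<cdot> s" t] by simp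

lemma sinv_mul_sinv_left [simp]:
  "s \<in> arr S \<Longrightarrow> t \<in> arr S \<Longrightarrow> cd S s = cd S t \<Longrightarrow> s\<^sup>\<star> \<cdot> s \<cdot> s\<^sup>\<star> \<cdot> t = s\<^sup>\<star> \<cdot> t"
  using mul_assoc[of "s\<^sup>\<star>" "s \<cdot> s\<^sup>\<star>" t] by simp

lemma sinv_unique:
  assumes "s \<in> arr S" "t \<in> arr S" "dm S t = cd S s" "cd S t = dm S s"
    and "s \<cdot> t \<cdot> s = s" "t \<cdot> s \<cdot> t = t"
  shows "t = s\<^sup>\<star>"
  using inverse assms unfolding inverse_semigroupoid_def by auto

lemma sinv_sinv [simp]: "s \<in> arr S \<Longrightarrow> s\<^sup>\<star>\<^sup>\<star> = s"
  by (rule sinv_unique[symmetric]) simp_all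

lemma idemsD: "e \<in> idems S \<Longrightarrow> e \<in> arr S" "e \<in> idems S \<Longrightarrow> cd S e = dm S e"
  "e \<in> idems S \<Longrightarrow> e \<cdot> e = e"
  unfolding idems_def by auto

lemma idem_sinv:
  assumes "e \<in> idems S" shows "e\<^sup>\<star> = e"
  using idemsD[OF assms] by (intro sinv_unique[symmetric]) simp_all

lemma idem_mul_absorb:
  assumes "e \<in> idems S" "t \<in> arr S" "dm S e = cd S t" shows "e \<cdot> e \<cdot> t = e \<cdot> t"
  using mul_assoc[of e e t] idemsD[OF assms(1)] assms(2,3) by simp

lemma sinv_mul_idem: "s \<in> arr S \<Longrightarrow> s\<^sup>\<star> \<cdot> s \<in> idems S"
  and mul_sinv_idem: "s \<in> arr S \<Longrightarrow> s \<cdot> s\<^sup>\<star> \<in> idems S"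
  unfolding idems_def by simp_all

text \<open>Uniqueness of inverses shows \<open>f (ef)\<^sup>\<star> e = (ef)\<^sup>\<star>\<close>, whence \<open>(ef)\<^sup>\<star>\<close> and so \<open>ef\<close> are idempotent.\<close>

lemma idem_mul_closed:
  assumes e: "e \<in> idems S" and f: "f \<in> idems S" and ef: "dm S e = dm S f"
  shows "e \<cdot> f \<in> idems S"
proof -
  note facts = idemsD[OF e] idemsD[OF f] ef
  have absorb: "e \<cdot> e \<cdot> t = e \<cdot> t" "f \<cdot> f \<cdot> t = f \<cdot> t" if "t \<in> arr S" "cd S t = dm S e" for t
    using idem_mul_absorb[OF e] idem_mul_absorb[OF f] facts that by auto
  define x where "x = (e \<cdot> f)\<^sup>\<star>"
  have x: "x \<in> arr S" "dm S x = dm S e" "cd S x = dm S e"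
    unfolding x_def using facts by auto
  have efxef: "e \<cdot> f \<cdot> x \<cdot> e \<cdot> f = e \<cdot> f"
    using mul_sinv_mul[of "e \<cdot> f"] facts unfolding x_def by (simp del: mul_sinv_mul)
  have xefx: "x \<cdot> e \<cdot> f \<cdot> x \<cdot> t = x \<cdot> t" if "t \<in> arr S" "cd S t = dm S e" for t
    using sinv_mul_sinv_left[of "e \<cdot> f" t] facts that unfolding x_def by (simp del: sinv_mul_sinv_left)
  have "f \<cdot> x \<cdot> e = x"
    unfolding x_def
  proof (rule sinv_unique)
    show "(e \<cdot> f) \<cdot> (f \<cdot> (e \<cdot> f)\<^sup>\<star> \<cdot> e) \<cdot> e \<cdot> f = e \<cdot> f"
      using efxef absorb facts x unfolding x_def by simp
    show "(f \<cdot> (e \<cdot> f)\<^sup>\<star> \<cdot> e) \<cdot> (e \<cdot> f) \<cdot> f \<cdot> (e \<cdot> f)\<^sup>\<star> \<cdot> e = f \<cdot> (e \<cdot> f)\<^sup>\<star> \<cdot> e"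
      using xefx absorb facts x unfolding x_def by simp
  qed (use facts x_def x in simp_all)
  note fxe = this
  have "x \<cdot> x = (f \<cdot> x \<cdot> e) \<cdot> f \<cdot> x \<cdot> e"
    using fxe by simp
  also have "\<dots> = f \<cdot> x \<cdot> e \<cdot> f \<cdot> x \<cdot> e"
    using facts x by simp
  also have "\<dots> = x"
    using xefx[of e] fxe facts by simp
  finally have "x \<in> idems S"
    unfolding idems_def using x by simp
  moreover have "e \<cdot> f = x"
    using idem_sinv[OF \<open>x \<in> idems S\<close>] facts unfolding x_def by simp
  ultimately show ?thesis by simp
qed

lemma idem_commute:
  assumes e: "e \<in> idems S" and f: "f \<in> idems S" and ef: "dm S e = dm S f"
  shows "e \<cdot> f = f \<cdot> e"
proof -
  note facts = idemsD[OF e] idemsD[OF f] ef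
  have absorb: "e \<cdot> e \<cdot> t = e \<cdot> t" "f \<cdot> f \<cdot> t = f \<cdot> t" if "t \<in> arr S" "cd S t = dm S e" for t
    using idem_mul_absorb[OF e] idem_mul_absorb[OF f] facts that by auto
  have "e \<cdot> f \<in> idems S" "f \<cdot> e \<in> idems S"
    using idem_mul_closed e f ef by auto
  then have efef: "e \<cdot> f \<cdot> e \<cdot> f = e \<cdot> f" and fefe: "f \<cdot> e \<cdot> f \<cdot> e = f \<cdot> e"
    using facts idemsD(3) by fastforce+
  have "f \<cdot> e = (e \<cdot> f)\<^sup>\<star>"
    by (rule sinv_unique) (use facts absorb efef fefe in simp_all)
  then show ?thesis
    using idem_sinv[OF \<open>e \<cdot> f \<in> idems S\<close>] by simp
qed

lemma idem_left_commute:
  assumes "e \<in> idems S" "f \<in> idems S" "dm S e = dm S f" "t \<in> arr S" "cd S t = dm S e"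
  shows "e \<cdot> f \<cdot> t = f \<cdot> e \<cdot> t"
proof -
  note facts = idemsD[OF assms(1)] idemsD[OF assms(2)] assms(3-5)
  have "e \<cdot> f \<cdot> t = (e \<cdot> f) \<cdot> t"
    using facts by simp
  also have "\<dots> = (f \<cdot> e) \<cdot> t"
    using idem_commute[OF assms(1-3)] by (rule arg_cong)
  also have "\<dots> = f \<cdot> e \<cdot> t"
    using facts by simp
  finally show ?thesis .
qed

lemma mul_sinv_left_commute:
  assumes "a \<in> arr S" "b \<in> arr S" "cd S a = cd S b" "t \<in> arr S" "cd S t = cd S a"
  shows "a \<cdot> a\<^sup>\<star> \<cdot> b \<cdot> b\<^sup>\<star> \<cdot> t = b \<cdot> b\<^sup>\<star> \<cdot> a \<cdot> a\<^sup>\<star> \<cdot> t"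
  using idem_left_commute[OF mul_sinv_idem mul_sinv_idem, of a b t] assms by simp

lemma sinv_mul_mul_sinv_left_commute:
  assumes "a \<in> arr S" "b \<in> arr S" "dm S a = cd S b" "t \<in> arr S" "cd S t = dm S a"
  shows "a\<^sup>\<star> \<cdot> a \<cdot> b \<cdot> b\<^sup>\<star> \<cdot> t = b \<cdot> b\<^sup>\<star> \<cdot> a\<^sup>\<star> \<cdot> a \<cdot> t"
  using idem_left_commute[OF sinv_mul_idem mul_sinv_idem, of a b t] assms by simp

lemma idem_sinv_mul_left_commute:
  assumes "e \<in> idems S" "a \<in> arr S" "dm S e = dm S a" "t \<in> arr S" "cd S t = dm S e"
  shows "e \<cdot> a\<^sup>\<star> \<cdot> a \<cdot> t = a\<^sup>\<star> \<cdot> a \<cdot> e \<cdot> t"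
  using idem_left_commute[OF assms(1) sinv_mul_idem, of a t] idemsD[OF assms(1)] assms(2-5) by simp

lemma sinv_mul [simp]:
  assumes "a \<in> arr S" "b \<in> arr S" "dm S a = cd S b"
  shows "(a \<cdot> b)\<^sup>\<star> = b\<^sup>\<star> \<cdot> a\<^sup>\<star>"
proof (rule sinv_unique[symmetric])
  have "a\<^sup>\<star> \<cdot> a \<cdot> b \<cdot> b\<^sup>\<star> \<cdot> b = b \<cdot> b\<^sup>\<star> \<cdot> a\<^sup>\<star> \<cdot> a \<cdot> b"
    by (rule sinv_mul_mul_sinv_left_commute) (use assms in simp_all)
  then show "(a \<cdot> b) \<cdot> (b\<^sup>\<star> \<cdot> a\<^sup>\<star>) \<cdot> a \<cdot> b = a \<cdot> b"
    using assms by simp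
  have "a\<^sup>\<star> \<cdot> a \<cdot> b \<cdot> b\<^sup>\<star> \<cdot> a\<^sup>\<star> = b \<cdot> b\<^sup>\<star> \<cdot> a\<^sup>\<star> \<cdot> a \<cdot> a\<^sup>\<star>"
    by (rule sinv_mul_mul_sinv_left_commute) (use assms in simp_all)
  then show "(b\<^sup>\<star> \<cdot> a\<^sup>\<star>) \<cdot> (a \<cdot> b) \<cdot> b\<^sup>\<star> \<cdot> a\<^sup>\<star> = b\<^sup>\<star> \<cdot> a\<^sup>\<star>"
    using assms by simp
qed (use assms in simp_all)

lemma nat_le_mul_idem: "t \<in> arr S \<Longrightarrow> e \<in> idems S \<Longrightarrow> dm S t = cd S e \<Longrightarrow> nat_le S (t \<cdot> e) t"
  unfolding nat_le_def composable_def using idemsD by auto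

lemma nat_le_idem_mul_sinv:
  assumes b: "b \<in> arr S" and e: "e \<in> idems S" and be: "dm S b = cd S e"
  shows "nat_le S (e \<cdot> b\<^sup>\<star>) (b\<^sup>\<star>)"
proof -
  note facts = idemsD[OF e]
  have "b \<cdot> e \<cdot> b\<^sup>\<star> \<cdot> b \<cdot> e \<cdot> b\<^sup>\<star> = b \<cdot> b\<^sup>\<star> \<cdot> b \<cdot> e \<cdot> e \<cdot> b\<^sup>\<star>"
    using idem_sinv_mul_left_commute[of e b "e \<cdot> b\<^sup>\<star>"] e facts b be by simp
  also have "\<dots> = b \<cdot> e \<cdot> b\<^sup>\<star>"
    using idem_mul_absorb[OF e, of "b\<^sup>\<star>"] facts b be by simp
  finally have "b \<cdot> e \<cdot> b\<^sup>\<star> \<in> idems S"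
    unfolding idems_def using facts b be by simp
  moreover have "e \<cdot> b\<^sup>\<star> = b\<^sup>\<star> \<cdot> b \<cdot> e \<cdot> b\<^sup>\<star>"
    using idem_sinv_mul_left_commute[of e b "b\<^sup>\<star>"] e facts b be by simp
  ultimately show ?thesis
    using nat_le_mul_idem[of "b\<^sup>\<star>" "b \<cdot> e \<cdot> b\<^sup>\<star>"] b facts be by simp
qed

lemma nat_le_idem_sandwich_sinv_mul:
  assumes b: "b \<in> arr S" and e: "e \<in> idems S" and be: "dm S b = cd S e"
  shows "nat_le S (e \<cdot> b\<^sup>\<star> \<cdot> b \<cdot> e) e"
proof -
  note facts = idemsD[OF e]
  have "b\<^sup>\<star> \<cdot> b \<cdot> e = e \<cdot> b\<^sup>\<star> \<cdot> b"
    using idem_commute[OF sinv_mul_idem[of b] e] facts b be by simp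
  then have "e \<cdot> b\<^sup>\<star> \<cdot> b \<cdot> e = e \<cdot> e \<cdot> b\<^sup>\<star> \<cdot> b"
    by simp
  also have "\<dots> = e \<cdot> b\<^sup>\<star> \<cdot> b"
    using idem_mul_absorb[OF e, of "b\<^sup>\<star> \<cdot> b"] b be facts by simp
  finally show ?thesis
    using nat_le_mul_idem[of e "b\<^sup>\<star> \<cdot> b"] sinv_mul_idem[of b] facts b be by simp
qed

lemma idem_sandwich:
  assumes e: "e \<in> idems S" and f: "f \<in> idems S" and g: "g \<in> idems S"
    and parallel: "dm S e = dm S f" "dm S g = dm S e"
  shows "f \<cdot> g \<cdot> e = e \<cdot> g \<cdot> f" and "(f \<cdot> g \<cdot> f) \<cdot> e \<cdot> g \<cdot> e = e \<cdot> g \<cdot> f"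
proof -
  note facts = idemsD[OF e] idemsD[OF f] idemsD[OF g] parallel
  have comm: "g \<cdot> f = f \<cdot> g" "g \<cdot> e = e \<cdot> g" "f \<cdot> e = e \<cdot> f"
    using idem_commute e f g parallel by auto
  have "f \<cdot> g \<cdot> e = f \<cdot> e \<cdot> g"
    using comm by simp
  also have "\<dots> = e \<cdot> f \<cdot> g"
    using idem_left_commute[OF f e] facts by simp
  also have "\<dots> = e \<cdot> g \<cdot> f"
    using comm by simp
  finally show fge: "f \<cdot> g \<cdot> e = e \<cdot> g \<cdot> f" .
  have "(f \<cdot> g \<cdot> f) \<cdot> e \<cdot> g \<cdot> e = (f \<cdot> f \<cdot> g) \<cdot> e \<cdot> e \<cdot> g"
    using comm by simp
  also have "\<dots> = (f \<cdot> g) \<cdot> e \<cdot> g"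
    using facts by (simp del: mul_assoc add: mul_assoc[symmetric])
  also have "\<dots> = f \<cdot> g \<cdot> g \<cdot> e"
    using comm facts by simp
  also have "\<dots> = f \<cdot> g \<cdot> e"
    using facts by (simp del: mul_assoc add: mul_assoc[symmetric])
  finally show "(f \<cdot> g \<cdot> f) \<cdot> e \<cdot> g \<cdot> e = e \<cdot> g \<cdot> f"
    using fge by simp
qed

end

locale partial_action_on = inv_semigroupoid S for S :: "('s, 'o, 'z) semigroupoid_scheme" +
  fixes X :: "'x set" and \<theta> :: "('s, 'x) pact"
  assumes partial: "partial_action S X \<theta>"
begin

lemma pdom_subset: "s \<in> arr S \<Longrightarrow> pdom \<theta> s \<subseteq> X"
  and carrier_eq_Union_pdom: "X = (\<Union>s \<in> arr S. pdom \<theta> s)"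
  and pdom_mono: "nat_le S s t \<Longrightarrow> pdom \<theta> s \<subseteq> pdom \<theta> t"
  using partial unfolding partial_action_def by blast+

lemma pmap_in_pdom: "s \<in> arr S \<Longrightarrow> x \<in> pdom \<theta> (s\<^sup>\<star>) \<Longrightarrow> pmap \<theta> s x \<in> pdom \<theta> s"
  using partial unfolding partial_action_def bij_betw_def by blast

lemma pmap_sinv_pmap [simp]: "s \<in> arr S \<Longrightarrow> x \<in> pdom \<theta> (s\<^sup>\<star>) \<Longrightarrow> pmap \<theta> (s\<^sup>\<star>) (pmap \<theta> s x) = x"
  using partial unfolding partial_action_def by blast

lemma
  assumes "s \<in> arr S" "t \<in> arr S" "dm S s = cd S t" "x \<in> pdom \<theta> (t\<^sup>\<star>)" "pmap \<theta> t x \<in> pdom \<theta> (s\<^sup>\<star>)"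
  shows pdom_mul: "x \<in> pdom \<theta> (t\<^sup>\<star> \<cdot> s\<^sup>\<star>)"
    and pmap_mul: "pmap \<theta> (s \<cdot> t) x = pmap \<theta> s (pmap \<theta> t x)"
proof -
  have "composable S s t"
    using assms unfolding composable_def by simp
  then have "x \<in> pdom \<theta> ((s \<cdot> t)\<^sup>\<star>) \<and> pmap \<theta> (s \<cdot> t) x = pmap \<theta> s (pmap \<theta> t x)"
    using partial assms(4,5) unfolding partial_action_def by blast
  then show "x \<in> pdom \<theta> (t\<^sup>\<star> \<cdot> s\<^sup>\<star>)" "pmap \<theta> (s \<cdot> t) x = pmap \<theta> s (pmap \<theta> t x)"
    using assms by auto
qed

lemma pmap_idem:
  assumes e: "e \<in> idems S" and x: "x \<in> pdom \<theta> e"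
  shows "pmap \<theta> e x = x"
proof -
  note facts = idemsD[OF e]
  have x': "x \<in> pdom \<theta> (e\<^sup>\<star>)"
    using x idem_sinv[OF e] by simp
  have y: "pmap \<theta> e x \<in> pdom \<theta> (e\<^sup>\<star>)"
    using pmap_in_pdom[of e x] x' idem_sinv[OF e] facts by simp
  have "pmap \<theta> e x = pmap \<theta> e (pmap \<theta> e x)"
    using pmap_mul[of e e x] x' y facts by simp
  then have "pmap \<theta> (e\<^sup>\<star>) (pmap \<theta> e x) = pmap \<theta> (e\<^sup>\<star>) (pmap \<theta> e (pmap \<theta> e x))"
    by simp
  then show ?thesis
    using x' y facts by simp
qed

lemma pdom_subset_range_idem:
  assumes "s \<in> arr S" shows "pdom \<theta> s \<subseteq> pdom \<theta> (s \<cdot> s\<^sup>\<star>)"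
proof
  fix y assume "y \<in> pdom \<theta> s"
  then have y: "y \<in> pdom \<theta> (s\<^sup>\<star>\<^sup>\<star>)"
    using assms by simp
  have "pmap \<theta> (s\<^sup>\<star>) y \<in> pdom \<theta> (s\<^sup>\<star>)"
    using pmap_in_pdom[of "s\<^sup>\<star>" y] y assms by simp
  then show "y \<in> pdom \<theta> (s \<cdot> s\<^sup>\<star>)"
    using pdom_mul[of s "s\<^sup>\<star>" y] y assms by simp
qed

lemma pmap_mul_idem:
  assumes b: "b \<in> arr S" and e: "e \<in> idems S" and be: "dm S b = cd S e"
    and x: "x \<in> pdom \<theta> (e \<cdot> b\<^sup>\<star>)"
  shows "x \<in> pdom \<theta> (b\<^sup>\<star>)" and "pmap \<theta> (b \<cdot> e) x = pmap \<theta> b x"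
proof -
  note facts = idemsD[OF e] idem_sinv[OF e]
  show xb: "x \<in> pdom \<theta> (b\<^sup>\<star>)"
    using pdom_mono[OF nat_le_idem_mul_sinv[OF b e be]] x by blast
  have "x \<in> pdom \<theta> ((e \<cdot> b\<^sup>\<star>) \<cdot> (e \<cdot> b\<^sup>\<star>)\<^sup>\<star>)"
    using pdom_subset_range_idem[of "e \<cdot> b\<^sup>\<star>"] x facts b be by auto
  then have "x \<in> pdom \<theta> (e \<cdot> b\<^sup>\<star> \<cdot> b \<cdot> e)"
    using facts b be by simp
  then have xe: "x \<in> pdom \<theta> e"
    using pdom_mono[OF nat_le_idem_sandwich_sinv_mul[OF b e be]] by blast
  then have "pmap \<theta> e x = x"
    using pmap_idem e by simp
  then show "pmap \<theta> (b \<cdot> e) x = pmap \<theta> b x"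
    using pmap_mul[of b e x] b facts be xe xb by simp
qed

end

context partial_action_on
begin

lemma glob_D_iff: "(s, x) \<in> glob_D S \<theta> \<longleftrightarrow> s \<in> arr S \<and> x \<in> pdom \<theta> (s\<^sup>\<star> \<cdot> s)"
  unfolding glob_D_def by simp

lemma
  assumes "p \<in> arr S" "q \<in> arr S" "cd S p = cd S q" "x \<in> pdom \<theta> (p\<^sup>\<star> \<cdot> q)"
  shows pmap_sinv_mul_in_pdom: "pmap \<theta> (q\<^sup>\<star> \<cdot> p) x \<in> pdom \<theta> (q\<^sup>\<star> \<cdot> p)"
    and pmap_sinv_mul_swap: "pmap \<theta> (p\<^sup>\<star> \<cdot> q) (pmap \<theta> (q\<^sup>\<star> \<cdot> p) x) = x"
proof -
  have x: "x \<in> pdom \<theta> ((q\<^sup>\<star> \<cdot> p)\<^sup>\<star>)"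
    using assms by simp
  show "pmap \<theta> (q\<^sup>\<star> \<cdot> p) x \<in> pdom \<theta> (q\<^sup>\<star> \<cdot> p)"
    using pmap_in_pdom[OF _ x] assms by simp
  show "pmap \<theta> (p\<^sup>\<star> \<cdot> q) (pmap \<theta> (q\<^sup>\<star> \<cdot> p) x) = x"
    using pmap_sinv_pmap[OF _ x] assms by simp
qed

lemma
  assumes pqr: "p \<in> arr S" "q \<in> arr S" "r \<in> arr S" "cd S p = cd S q" "cd S q = cd S r"
    and x: "x \<in> pdom \<theta> (p\<^sup>\<star> \<cdot> q)" and y: "pmap \<theta> (q\<^sup>\<star> \<cdot> p) x \<in> pdom \<theta> (q\<^sup>\<star> \<cdot> r)"
  shows pdom_sinv_mul_trans: "x \<in> pdom \<theta> (p\<^sup>\<star> \<cdot> r)"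
    and pmap_sinv_mul_trans: "pmap \<theta> (r\<^sup>\<star> \<cdot> p) x = pmap \<theta> (r\<^sup>\<star> \<cdot> q) (pmap \<theta> (q\<^sup>\<star> \<cdot> p) x)"
proof -
  have x': "x \<in> pdom \<theta> ((q\<^sup>\<star> \<cdot> p)\<^sup>\<star>)" and y': "pmap \<theta> (q\<^sup>\<star> \<cdot> p) x \<in> pdom \<theta> ((r\<^sup>\<star> \<cdot> q)\<^sup>\<star>)"
    using pqr x y by simp_all
  have comp: "x \<in> pdom \<theta> ((q\<^sup>\<star> \<cdot> p)\<^sup>\<star> \<cdot> (r\<^sup>\<star> \<cdot> q)\<^sup>\<star>)"
      "pmap \<theta> ((r\<^sup>\<star> \<cdot> q) \<cdot> q\<^sup>\<star> \<cdot> p) x = pmap \<theta> (r\<^sup>\<star> \<cdot> q) (pmap \<theta> (q\<^sup>\<star> \<cdot> p) x)"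
    using pdom_mul[OF _ _ _ x' y'] pmap_mul[OF _ _ _ x' y'] pqr by simp_all
  let ?e = "p\<^sup>\<star> \<cdot> q \<cdot> q\<^sup>\<star> \<cdot> p"
  have e: "?e \<in> idems S"
    using mul_sinv_idem[of "p\<^sup>\<star> \<cdot> q"] pqr by simp
  have "p \<cdot> ?e = q \<cdot> q\<^sup>\<star> \<cdot> p"
    using mul_sinv_left_commute[of p q p] pqr by simp
  moreover have "q \<cdot> q\<^sup>\<star> \<cdot> p \<cdot> p\<^sup>\<star> \<cdot> r = p \<cdot> p\<^sup>\<star> \<cdot> q \<cdot> q\<^sup>\<star> \<cdot> r"
    by (rule mul_sinv_left_commute) (use pqr in auto)
  then have "x \<in> pdom \<theta> (?e \<cdot> (r\<^sup>\<star> \<cdot> p)\<^sup>\<star>)"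
    using comp(1) pqr by simp
  ultimately show "x \<in> pdom \<theta> (p\<^sup>\<star> \<cdot> r)"
      "pmap \<theta> (r\<^sup>\<star> \<cdot> p) x = pmap \<theta> (r\<^sup>\<star> \<cdot> q) (pmap \<theta> (q\<^sup>\<star> \<cdot> p) x)"
    using pmap_mul_idem[of "r\<^sup>\<star> \<cdot> p" ?e x] e comp(2) pqr idemsD[OF e] by simp_all
qed

lemma
  assumes pq: "p \<in> arr S" "q \<in> arr S" "cd S p = cd S q"
    and x: "x \<in> pdom \<theta> (p\<^sup>\<star> \<cdot> q)" and y: "pmap \<theta> (q\<^sup>\<star> \<cdot> p) x \<in> pdom \<theta> (q\<^sup>\<star>)"
  shows pdom_sinv_mul_image: "x \<in> pdom \<theta> (p\<^sup>\<star>)"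
    and pmap_sinv_mul_image: "pmap \<theta> p x = pmap \<theta> q (pmap \<theta> (q\<^sup>\<star> \<cdot> p) x)"
proof -
  have x': "x \<in> pdom \<theta> ((q\<^sup>\<star> \<cdot> p)\<^sup>\<star>)"
    using pq x by simp
  have comp: "x \<in> pdom \<theta> ((q\<^sup>\<star> \<cdot> p)\<^sup>\<star> \<cdot> q\<^sup>\<star>)"
      "pmap \<theta> (q \<cdot> q\<^sup>\<star> \<cdot> p) x = pmap \<theta> q (pmap \<theta> (q\<^sup>\<star> \<cdot> p) x)"
    using pdom_mul[OF _ _ _ x' y] pmap_mul[OF _ _ _ x' y] pq by simp_all
  let ?e = "p\<^sup>\<star> \<cdot> q \<cdot> q\<^sup>\<star> \<cdot> p"
  have e: "?e \<in> idems S"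
    using mul_sinv_idem[of "p\<^sup>\<star> \<cdot> q"] pq by simp
  have "p \<cdot> ?e = q \<cdot> q\<^sup>\<star> \<cdot> p"
    using mul_sinv_left_commute[of p q p] pq by simp
  moreover have "(q \<cdot> q\<^sup>\<star>) \<cdot> p \<cdot> p\<^sup>\<star> = (p \<cdot> p\<^sup>\<star>) \<cdot> q \<cdot> q\<^sup>\<star>"
    using idem_commute[OF mul_sinv_idem mul_sinv_idem, of q p] pq by simp
  then have "x \<in> pdom \<theta> (?e \<cdot> p\<^sup>\<star>)"
    using comp(1) pq by simp
  ultimately show "x \<in> pdom \<theta> (p\<^sup>\<star>)" "pmap \<theta> p x = pmap \<theta> q (pmap \<theta> (q\<^sup>\<star> \<cdot> p) x)"
    using pmap_mul_idem[of p ?e x] e comp(2) pq idemsD[OF e] by simp_all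
qed

text \<open>An equivalence containing \<open>\<approx>\<close> that, unlike \<open>\<approx>\<close> itself, can be transported along left
  multiplication (\<open>glob_approx_mul_left\<close>); this is what makes \<open>\<eta>\<close> well defined.\<close>

definition glob_rel :: "(('s \<times> 'x) \<times> ('s \<times> 'x)) set" where
  "glob_rel = {((p, x), (q, y)). (p, x) \<in> glob_D S \<theta> \<and> (q, y) \<in> glob_D S \<theta> \<and>
     ((cd S p = cd S q \<and> x \<in> pdom \<theta> (p\<^sup>\<star> \<cdot> q) \<and> pmap \<theta> (q\<^sup>\<star> \<cdot> p) x = y) \<or>
      (x \<in> pdom \<theta> (p\<^sup>\<star>) \<and> y \<in> pdom \<theta> (q\<^sup>\<star>) \<and> pmap \<theta> p x = pmap \<theta> q y))}"

lemma glob_rel_refl: "(p, x) \<in> glob_D S \<theta> \<Longrightarrow> ((p, x), (p, x)) \<in> glob_rel"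
  unfolding glob_rel_def using pmap_idem[OF sinv_mul_idem] by (auto simp: glob_D_iff)

lemma glob_rel_sym:
  assumes "((p, x), (q, y)) \<in> glob_rel" shows "((q, y), (p, x)) \<in> glob_rel"
proof -
  have D: "(p, x) \<in> glob_D S \<theta>" "(q, y) \<in> glob_D S \<theta>" and pq: "p \<in> arr S" "q \<in> arr S"
    using assms unfolding glob_rel_def by (auto simp: glob_D_iff)
  then show ?thesis
    using assms pmap_sinv_mul_in_pdom[of p q x] pmap_sinv_mul_swap[of p q x]
    unfolding glob_rel_def by auto
qed

lemma glob_rel_trans:
  assumes xy: "((p, x), (q, y)) \<in> glob_rel" and yz: "((q, y), (r, z)) \<in> glob_rel"
  shows "((p, x), (r, z)) \<in> glob_rel"
proof -
  have D: "(p, x) \<in> glob_D S \<theta>" "(r, z) \<in> glob_D S \<theta>" and pqr: "p \<in> arr S" "q \<in> arr S" "r \<in> arr S"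
    using xy yz unfolding glob_rel_def by (auto simp: glob_D_iff)
  consider (R1) "cd S p = cd S q" "x \<in> pdom \<theta> (p\<^sup>\<star> \<cdot> q)" "pmap \<theta> (q\<^sup>\<star> \<cdot> p) x = y"
    | (image) "x \<in> pdom \<theta> (p\<^sup>\<star>)" "y \<in> pdom \<theta> (q\<^sup>\<star>)" "pmap \<theta> p x = pmap \<theta> q y"
    using xy unfolding glob_rel_def by auto
  note first = this
  consider (R1) "cd S q = cd S r" "y \<in> pdom \<theta> (q\<^sup>\<star> \<cdot> r)" "pmap \<theta> (r\<^sup>\<star> \<cdot> q) y = z"
    | (image) "y \<in> pdom \<theta> (q\<^sup>\<star>)" "z \<in> pdom \<theta> (r\<^sup>\<star>)" "pmap \<theta> q y = pmap \<theta> r z"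
    using yz unfolding glob_rel_def by auto
  note second = this
  show ?thesis
  proof (cases rule: first)
    case R1
    then show ?thesis
    proof (cases rule: second)
      case R1': R1
      then show ?thesis
        using R1 D pqr pdom_sinv_mul_trans[of p q r x] pmap_sinv_mul_trans[of p q r x]
        unfolding glob_rel_def by auto
    next
      case image
      then show ?thesis
        using R1 D pqr pdom_sinv_mul_image[of p q x] pmap_sinv_mul_image[of p q x]
        unfolding glob_rel_def by auto
    qed
  next
    case image
    then show ?thesis
    proof (cases rule: second)
      case R1
      then have "z \<in> pdom \<theta> (r\<^sup>\<star> \<cdot> q)" "pmap \<theta> (q\<^sup>\<star> \<cdot> r) z = y"
        using pqr pmap_sinv_mul_in_pdom[of q r y] pmap_sinv_mul_swap[of q r y] by auto
      then show ?thesis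
        using R1 image D pqr pdom_sinv_mul_image[of r q z] pmap_sinv_mul_image[of r q z]
        unfolding glob_rel_def by auto
    next
      case image': image
      then show ?thesis
        using image D unfolding glob_rel_def by auto
    qed
  qed
qed

lemma glob_sim_subset_glob_rel: "glob_sim S \<theta> \<subseteq> glob_rel"
proof (rule subrelI)
  fix a b assume ab: "(a, b) \<in> glob_sim S \<theta>"
  obtain s x t y where st: "a = (s, x)" "b = (t, y)"
    by (cases a, cases b) auto
  have D: "(s, x) \<in> glob_D S \<theta>" "(t, y) \<in> glob_D S \<theta>" and A: "s \<in> arr S" "t \<in> arr S"
    using ab st unfolding glob_sim_def by (auto simp: glob_D_iff)
  consider (R1) "composable S (t\<^sup>\<star>) s" "x \<in> pdom \<theta> (s\<^sup>\<star> \<cdot> t)" "pmap \<theta> (t\<^sup>\<star> \<cdot> s) x = y"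
    | (R2) "s \<in> idems S" "t \<in> idems S" "x = y"
    using ab st unfolding glob_sim_def by auto
  then show "(a, b) \<in> glob_rel"
  proof cases
    case R1
    then show ?thesis
      unfolding glob_rel_def composable_def using st D A by auto
  next
    case R2
    then have "x \<in> pdom \<theta> s" "y \<in> pdom \<theta> t"
      using D idem_sinv idemsD(3) by (auto simp: glob_D_iff)
    then show ?thesis
      unfolding glob_rel_def using st D R2 pmap_idem idem_sinv by auto
  qed
qed

lemma glob_approx_subset_glob_rel: "glob_approx S \<theta> \<subseteq> glob_rel"
proof (rule subrelI)
  fix a b assume ab: "(a, b) \<in> glob_approx S \<theta>"
  then have steps: "(a, b) \<in> (glob_sim S \<theta> \<union> (glob_sim S \<theta>)\<inverse>)\<^sup>*" and "a \<in> glob_D S \<theta>"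
    unfolding glob_approx_def by auto
  from steps show "(a, b) \<in> glob_rel"
  proof (induction rule: rtrancl_induct)
    case base
    show ?case using \<open>a \<in> glob_D S \<theta>\<close> glob_rel_refl by (cases a) auto
  next
    case (step b c)
    have "(b, c) \<in> glob_rel"
      using step(2) glob_sim_subset_glob_rel glob_rel_sym by (cases b, cases c) auto
    then show ?case
      using step(3) glob_rel_trans by (cases a, cases b, cases c) blast
  qed
qed

lemma equiv_glob_approx: "equiv (glob_D S \<theta>) (glob_approx S \<theta>)"
proof (rule equivI)
  have "sym ((glob_sim S \<theta> \<union> (glob_sim S \<theta>)\<inverse>)\<^sup>*)"
    by (rule sym_rtrancl) (auto simp: sym_def)
  then show "sym (glob_approx S \<theta>)"
    unfolding glob_approx_def sym_def by blast
  show "trans (glob_approx S \<theta>)"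
    unfolding glob_approx_def trans_def by (blast intro: rtrancl_trans)
qed (auto simp: glob_approx_def refl_on_def)

lemma glob_sim_subset_glob_approx: "glob_sim S \<theta> \<subseteq> glob_approx S \<theta>"
  unfolding glob_approx_def glob_sim_def by auto

lemma glob_cls_eq_iff:
  "(s, x) \<in> glob_D S \<theta> \<Longrightarrow> (t, y) \<in> glob_D S \<theta> \<Longrightarrow>
    glob_cls S \<theta> s x = glob_cls S \<theta> t y \<longleftrightarrow> ((s, x), (t, y)) \<in> glob_approx S \<theta>"
  unfolding glob_cls_def by (rule eq_equiv_class_iff[OF equiv_glob_approx])

lemma glob_Ds_sinv_iff:
  "s \<in> arr S \<Longrightarrow> (p, x) \<in> glob_Ds S \<theta> (s\<^sup>\<star>) \<longleftrightarrow> p \<in> arr S \<and> dm S s = cd S p \<and>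
    x \<in> pdom \<theta> (p\<^sup>\<star> \<cdot> p) \<and> x \<in> pdom \<theta> (p\<^sup>\<star> \<cdot> s\<^sup>\<star> \<cdot> s \<cdot> p)"
  unfolding glob_Ds_def composable_def glob_D_iff by auto

lemma
  assumes sp: "s \<in> arr S" "p \<in> arr S" "dm S s = cd S p"
    and x: "x \<in> pdom \<theta> (p\<^sup>\<star> \<cdot> s\<^sup>\<star> \<cdot> s \<cdot> p)" "x \<in> pdom \<theta> (p\<^sup>\<star>)"
  shows glob_sim_range_idem: "((s \<cdot> p, x), (s \<cdot> p \<cdot> p\<^sup>\<star>, pmap \<theta> p x)) \<in> glob_sim S \<theta>"
    and pmap_in_pdom_range_idem: "pmap \<theta> p x \<in> pdom \<theta> (p \<cdot> p\<^sup>\<star> \<cdot> s\<^sup>\<star> \<cdot> s \<cdot> p \<cdot> p\<^sup>\<star>)"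
proof -
  define g where "g = p\<^sup>\<star> \<cdot> s\<^sup>\<star> \<cdot> s \<cdot> p"
  have g: "g \<in> idems S"
    unfolding g_def using sinv_mul_idem[of "s \<cdot> p"] sp by simp
  note gfacts = idemsD[OF g] idem_sinv[OF g]
  have gA: "dm S g = dm S p"
    unfolding g_def using sp by simp
  have xg: "x \<in> pdom \<theta> g"
    using x g_def by simp
  then have "pmap \<theta> g x = x"
    using pmap_idem[OF g] by simp
  then have xpg: "x \<in> pdom \<theta> (g \<cdot> p\<^sup>\<star>)" and pg: "pmap \<theta> (p \<cdot> g) x = pmap \<theta> p x"
    using pdom_mul[of p g x] pmap_mul[of p g x] sp gA gfacts xg x by auto
  have "pmap \<theta> (p \<cdot> g) x \<in> pdom \<theta> (p \<cdot> g)"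
    using pmap_in_pdom[of "p \<cdot> g" x] xpg sp gA gfacts by simp
  also have "\<dots> \<subseteq> pdom \<theta> ((p \<cdot> g) \<cdot> (p \<cdot> g)\<^sup>\<star>)"
    using pdom_subset_range_idem[of "p \<cdot> g"] sp gA gfacts by simp
  also have "(p \<cdot> g) \<cdot> (p \<cdot> g)\<^sup>\<star> = p \<cdot> p\<^sup>\<star> \<cdot> s\<^sup>\<star> \<cdot> s \<cdot> p \<cdot> p\<^sup>\<star>"
    using sp gA gfacts idem_mul_absorb[OF g, of "p\<^sup>\<star>"] unfolding g_def by simp
  finally show image: "pmap \<theta> p x \<in> pdom \<theta> (p \<cdot> p\<^sup>\<star> \<cdot> s\<^sup>\<star> \<cdot> s \<cdot> p \<cdot> p\<^sup>\<star>)"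
    using pg by simp
  have "(s \<cdot> p, x) \<in> glob_D S \<theta>" "(s \<cdot> p \<cdot> p\<^sup>\<star>, pmap \<theta> p x) \<in> glob_D S \<theta>"
    unfolding glob_D_iff using sp x image by simp_all
  moreover have "composable S ((s \<cdot> p \<cdot> p\<^sup>\<star>)\<^sup>\<star>) (s \<cdot> p)"
    unfolding composable_def using sp by simp
  moreover have "x \<in> pdom \<theta> ((s \<cdot> p)\<^sup>\<star> \<cdot> s \<cdot> p \<cdot> p\<^sup>\<star>)"
    using xpg sp unfolding g_def by simp
  moreover have "pmap \<theta> ((s \<cdot> p \<cdot> p\<^sup>\<star>)\<^sup>\<star> \<cdot> s \<cdot> p) x = pmap \<theta> p x"
    using pg sp unfolding g_def by simp
  ultimately show "((s \<cdot> p, x), (s \<cdot> p \<cdot> p\<^sup>\<star>, pmap \<theta> p x)) \<in> glob_sim S \<theta>"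
    unfolding glob_sim_def by auto
qed

lemma glob_sim_mul_left:
  assumes s: "s \<in> arr S"
    and px: "(p, x) \<in> glob_Ds S \<theta> (s\<^sup>\<star>)" and qy: "(q, y) \<in> glob_Ds S \<theta> (s\<^sup>\<star>)"
    and R1: "cd S p = cd S q" "x \<in> pdom \<theta> (p\<^sup>\<star> \<cdot> q)" "pmap \<theta> (q\<^sup>\<star> \<cdot> p) x = y"
  shows "((s \<cdot> p, x), (s \<cdot> q, y)) \<in> glob_sim S \<theta>"
proof -
  have p: "p \<in> arr S" "dm S s = cd S p" "x \<in> pdom \<theta> (p\<^sup>\<star> \<cdot> s\<^sup>\<star> \<cdot> s \<cdot> p)"
    and q: "q \<in> arr S" "dm S s = cd S q" "y \<in> pdom \<theta> (q\<^sup>\<star> \<cdot> s\<^sup>\<star> \<cdot> s \<cdot> q)"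
    using px qy glob_Ds_sinv_iff[OF s] by auto
  define g where "g = p\<^sup>\<star> \<cdot> s\<^sup>\<star> \<cdot> s \<cdot> p"
  have g: "g \<in> idems S" "dm S g = dm S p" "g\<^sup>\<star> = g"
    unfolding g_def using sinv_mul_idem[of "s \<cdot> p"] s p by auto
  have xg: "x \<in> pdom \<theta> g"
    using p g_def by simp
  then have gx: "pmap \<theta> g x = x"
    using pmap_idem g by simp
  have "x \<in> pdom \<theta> ((q\<^sup>\<star> \<cdot> p)\<^sup>\<star>)"
    using R1 p q by simp
  then have comp: "x \<in> pdom \<theta> (g\<^sup>\<star> \<cdot> (q\<^sup>\<star> \<cdot> p)\<^sup>\<star>)"
      "pmap \<theta> ((q\<^sup>\<star> \<cdot> p) \<cdot> g) x = pmap \<theta> (q\<^sup>\<star> \<cdot> p) (pmap \<theta> g x)"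
    using pdom_mul[of "q\<^sup>\<star> \<cdot> p" g x] pmap_mul[of "q\<^sup>\<star> \<cdot> p" g x] s p q idemsD[OF g(1)] g xg gx
    by auto
  have "s\<^sup>\<star> \<cdot> s \<cdot> p \<cdot> p\<^sup>\<star> \<cdot> q = p \<cdot> p\<^sup>\<star> \<cdot> s\<^sup>\<star> \<cdot> s \<cdot> q"
    by (rule sinv_mul_mul_sinv_left_commute) (use s p q R1 in auto)
  then have "x \<in> pdom \<theta> ((s \<cdot> p)\<^sup>\<star> \<cdot> s \<cdot> q)"
    using comp(1) g s p q R1 unfolding g_def by simp
  moreover have "s\<^sup>\<star> \<cdot> s \<cdot> p \<cdot> p\<^sup>\<star> \<cdot> p = p \<cdot> p\<^sup>\<star> \<cdot> s\<^sup>\<star> \<cdot> s \<cdot> p"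
    by (rule sinv_mul_mul_sinv_left_commute) (use s p in auto)
  then have "pmap \<theta> ((s \<cdot> q)\<^sup>\<star> \<cdot> s \<cdot> p) x = y"
    using comp(2) gx R1 s p q unfolding g_def by simp
  moreover have "composable S ((s \<cdot> q)\<^sup>\<star>) (s \<cdot> p)"
    unfolding composable_def using s p q by simp
  moreover have "(s \<cdot> p, x) \<in> glob_D S \<theta>" "(s \<cdot> q, y) \<in> glob_D S \<theta>"
    unfolding glob_D_iff using s p q by simp_all
  ultimately show ?thesis
    unfolding glob_sim_def by auto
qed

lemma glob_sim_mul_range_idems:
  assumes s: "s \<in> arr S" and p: "p \<in> arr S" "dm S s = cd S p" and q: "q \<in> arr S" "dm S s = cd S q"
    and w: "w \<in> pdom \<theta> (p \<cdot> p\<^sup>\<star> \<cdot> s\<^sup>\<star> \<cdot> s \<cdot> p \<cdot> p\<^sup>\<star>)" "w \<in> pdom \<theta> (q \<cdot> q\<^sup>\<star> \<cdot> s\<^sup>\<star> \<cdot> s \<cdot> q \<cdot> q\<^sup>\<star>)"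
  shows "((s \<cdot> p \<cdot> p\<^sup>\<star>, w), (s \<cdot> q \<cdot> q\<^sup>\<star>, w)) \<in> glob_sim S \<theta>"
proof -
  define e f h where "e = p \<cdot> p\<^sup>\<star>" and "f = q \<cdot> q\<^sup>\<star>" and "h = s\<^sup>\<star> \<cdot> s"
  have efh: "e \<in> idems S" "f \<in> idems S" "h \<in> idems S" "dm S e = dm S f" "dm S h = dm S e"
    unfolding e_def f_def h_def using sinv_mul_idem mul_sinv_idem s p q by auto
  note idems = idemsD[OF efh(1)] idemsD[OF efh(2)] idemsD[OF efh(3)]
  have I: "e \<cdot> h \<cdot> e \<in> idems S" "f \<cdot> h \<cdot> f \<in> idems S" "e \<cdot> h \<cdot> f \<in> idems S"
    using idem_mul_closed efh idems by simp_all
  have w_ehe: "w \<in> pdom \<theta> (e \<cdot> h \<cdot> e)" and w_fhf: "w \<in> pdom \<theta> (f \<cdot> h \<cdot> f)"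
    using w s p q unfolding e_def f_def h_def by simp_all
  then have "pmap \<theta> (f \<cdot> h \<cdot> f) w = w"
    using pmap_idem[OF I(2)] by simp
  then have "w \<in> pdom \<theta> ((f \<cdot> h \<cdot> f)\<^sup>\<star> \<cdot> (e \<cdot> h \<cdot> e)\<^sup>\<star>)"
    using pdom_mul[of "e \<cdot> h \<cdot> e" "f \<cdot> h \<cdot> f" w] idem_sinv[OF I(1)] idem_sinv[OF I(2)]
      idemsD[OF I(1)] idemsD[OF I(2)] w_ehe w_fhf idems efh by auto
  then have "w \<in> pdom \<theta> ((f \<cdot> h \<cdot> f) \<cdot> e \<cdot> h \<cdot> e)"
    using idem_sinv[OF I(1)] idem_sinv[OF I(2)] idems efh by simp
  then have w_ehf: "w \<in> pdom \<theta> (e \<cdot> h \<cdot> f)"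
    using idem_sandwich(2)[OF efh] by simp
  have w_fhe: "pmap \<theta> (f \<cdot> h \<cdot> e) w = w"
    using pmap_idem[OF I(3) w_ehf] idem_sandwich(1)[OF efh] by simp
  have "(s \<cdot> p \<cdot> p\<^sup>\<star>, w) \<in> glob_D S \<theta>" "(s \<cdot> q \<cdot> q\<^sup>\<star>, w) \<in> glob_D S \<theta>"
    unfolding glob_D_iff using s p q w by simp_all
  moreover have "composable S ((s \<cdot> q \<cdot> q\<^sup>\<star>)\<^sup>\<star>) (s \<cdot> p \<cdot> p\<^sup>\<star>)"
    unfolding composable_def using s p q by simp
  moreover have "(s \<cdot> p \<cdot> p\<^sup>\<star>)\<^sup>\<star> \<cdot> s \<cdot> q \<cdot> q\<^sup>\<star> = e \<cdot> h \<cdot> f"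
    "(s \<cdot> q \<cdot> q\<^sup>\<star>)\<^sup>\<star> \<cdot> s \<cdot> p \<cdot> p\<^sup>\<star> = f \<cdot> h \<cdot> e"
    unfolding e_def f_def h_def using s p q by simp_all
  ultimately show ?thesis
    unfolding glob_sim_def using w_ehf w_fhe by auto
qed

lemma glob_approx_mul_left:
  assumes s: "s \<in> arr S"
    and px: "(p, x) \<in> glob_Ds S \<theta> (s\<^sup>\<star>)" and qy: "(q, y) \<in> glob_Ds S \<theta> (s\<^sup>\<star>)"
    and rel: "((p, x), (q, y)) \<in> glob_rel"
  shows "((s \<cdot> p, x), (s \<cdot> q, y)) \<in> glob_approx S \<theta>"
proof -
  consider (R1) "cd S p = cd S q" "x \<in> pdom \<theta> (p\<^sup>\<star> \<cdot> q)" "pmap \<theta> (q\<^sup>\<star> \<cdot> p) x = y"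
    | (image) "x \<in> pdom \<theta> (p\<^sup>\<star>)" "y \<in> pdom \<theta> (q\<^sup>\<star>)" "pmap \<theta> p x = pmap \<theta> q y"
    using rel unfolding glob_rel_def by auto
  then show ?thesis
  proof cases
    case R1
    then show ?thesis
      using glob_sim_mul_left[OF s px qy] glob_sim_subset_glob_approx by blast
  next
    case image
    have p: "p \<in> arr S" "dm S s = cd S p" "x \<in> pdom \<theta> (p\<^sup>\<star> \<cdot> s\<^sup>\<star> \<cdot> s \<cdot> p)"
      and q: "q \<in> arr S" "dm S s = cd S q" "y \<in> pdom \<theta> (q\<^sup>\<star> \<cdot> s\<^sup>\<star> \<cdot> s \<cdot> q)"
      using px qy glob_Ds_sinv_iff[OF s] by auto
    define w where "w = pmap \<theta> p x"
    have to_p: "((s \<cdot> p, x), (s \<cdot> p \<cdot> p\<^sup>\<star>, w)) \<in> glob_sim S \<theta>"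
      "w \<in> pdom \<theta> (p \<cdot> p\<^sup>\<star> \<cdot> s\<^sup>\<star> \<cdot> s \<cdot> p \<cdot> p\<^sup>\<star>)"
      using glob_sim_range_idem[of s p x] pmap_in_pdom_range_idem[of s p x] s p image
      unfolding w_def by auto
    have to_q: "((s \<cdot> q, y), (s \<cdot> q \<cdot> q\<^sup>\<star>, w)) \<in> glob_sim S \<theta>"
      "w \<in> pdom \<theta> (q \<cdot> q\<^sup>\<star> \<cdot> s\<^sup>\<star> \<cdot> s \<cdot> q \<cdot> q\<^sup>\<star>)"
      using glob_sim_range_idem[of s q y] pmap_in_pdom_range_idem[of s q y] s q image
      unfolding w_def by auto
    have "((s \<cdot> p \<cdot> p\<^sup>\<star>, w), (s \<cdot> q \<cdot> q\<^sup>\<star>, w)) \<in> glob_sim S \<theta>"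
      using glob_sim_mul_range_idems s p(1,2) q(1,2) to_p(2) to_q(2) by blast
    moreover have "sym (glob_approx S \<theta>)" "trans (glob_approx S \<theta>)"
      using equiv_glob_approx by (auto elim: equivE)
    ultimately show ?thesis
      using to_p(1) to_q(1) glob_sim_subset_glob_approx by (meson subsetD symD transD)
  qed
qed

lemma glob_cls_eqI: "((s, x), (t, y)) \<in> glob_approx S \<theta> \<Longrightarrow> glob_cls S \<theta> s x = glob_cls S \<theta> t y"
  unfolding glob_cls_def by (rule equiv_class_eq[OF equiv_glob_approx])

lemma glob_Ds_subset_glob_D: "glob_Ds S \<theta> s \<subseteq> glob_D S \<theta>"
  unfolding glob_Ds_def by auto

lemma glob_E_cases:
  assumes "A \<in> glob_E S \<theta>"
  obtains s x where "(s, x) \<in> glob_D S \<theta>" "A = glob_cls S \<theta> s x"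
  using assms unfolding glob_E_def glob_cls_def by (auto elim!: quotientE)

lemma glob_eta_cls:
  assumes s: "s \<in> arr S" and px: "(p, x) \<in> glob_Ds S \<theta> (s\<^sup>\<star>)"
  shows "glob_eta S \<theta> s (glob_cls S \<theta> p x) = glob_cls S \<theta> (s \<cdot> p) x"
proof -
  define r where "r = (SOME r. r \<in> glob_Ds S \<theta> (s\<^sup>\<star>) \<and> glob_cls S \<theta> (fst r) (snd r) = glob_cls S \<theta> p x)"
  obtain q y where r: "r = (q, y)"
    by fastforce
  have qy: "(q, y) \<in> glob_Ds S \<theta> (s\<^sup>\<star>)" "glob_cls S \<theta> q y = glob_cls S \<theta> p x"
    using someI[of "\<lambda>r. r \<in> glob_Ds S \<theta> (s\<^sup>\<star>) \<and> glob_cls S \<theta> (fst r) (snd r) = glob_cls S \<theta> p x" "(p, x)"]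
      px unfolding r_def[symmetric] r by auto
  then have "((q, y), (p, x)) \<in> glob_rel"
    using glob_cls_eq_iff px glob_Ds_subset_glob_D glob_approx_subset_glob_rel by blast
  then have "((s \<cdot> q, y), (s \<cdot> p, x)) \<in> glob_approx S \<theta>"
    using glob_approx_mul_left s qy(1) px by blast
  then show ?thesis
    using glob_cls_eqI unfolding glob_eta_def Let_def r_def[symmetric] r by simp
qed

lemma exists_idem_pdom: "x \<in> X \<Longrightarrow> \<exists>e. e \<in> idems S \<and> x \<in> pdom \<theta> e"
  using carrier_eq_Union_pdom pdom_subset_range_idem mul_sinv_idem by blast

lemma glob_i_eq_cls:
  assumes "(s, x) \<in> glob_D S \<theta>" shows "glob_i S \<theta> x = glob_cls S \<theta> (s\<^sup>\<star> \<cdot> s) x"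
proof -
  have s: "s \<in> arr S" "x \<in> pdom \<theta> (s\<^sup>\<star> \<cdot> s)"
    using assms glob_D_iff by auto
  have "x \<in> X"
    using pdom_subset[of "s\<^sup>\<star> \<cdot> s"] s by auto
  define e where "e = (SOME e. e \<in> idems S \<and> x \<in> pdom \<theta> e)"
  have e: "e \<in> idems S" "x \<in> pdom \<theta> e"
    unfolding e_def using someI_ex[OF exists_idem_pdom[OF \<open>x \<in> X\<close>]] by blast+
  have "((e, x), (s\<^sup>\<star> \<cdot> s, x)) \<in> glob_sim S \<theta>"
    unfolding glob_sim_def glob_D_iff using e s sinv_mul_idem idem_sinv idemsD by auto
  then show ?thesis
    unfolding glob_i_def e_def[symmetric] using glob_cls_eqI glob_sim_subset_glob_approx by blast
qed

lemma equivariant_glob_E_eqI: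
  assumes k1: "equivariant S (glob_E S \<theta>) (glob_action S \<theta>) Y \<psi> k1"
    and k2: "equivariant S (glob_E S \<theta>) (glob_action S \<theta>) Y \<psi> k2"
    and agree: "\<forall>x \<in> X. k1 (glob_i S \<theta> x) = k2 (glob_i S \<theta> x)"
    and A: "A \<in> glob_E S \<theta>"
  shows "k1 A = k2 A"
proof -
  obtain s x where sx: "(s, x) \<in> glob_D S \<theta>" "A = glob_cls S \<theta> s x"
    using A by (rule glob_E_cases)
  have s: "s \<in> arr S" "x \<in> pdom \<theta> (s\<^sup>\<star> \<cdot> s)"
    using sx glob_D_iff by auto
  define B where "B = glob_cls S \<theta> (s\<^sup>\<star> \<cdot> s) x"
  have "(s\<^sup>\<star> \<cdot> s, x) \<in> glob_Ds S \<theta> (s\<^sup>\<star>)"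
    using glob_Ds_sinv_iff[OF s(1)] s by simp
  then have B: "B \<in> glob_Es S \<theta> (s\<^sup>\<star>)" and eta: "glob_eta S \<theta> s B = A"
    using glob_eta_cls[OF s(1)] s sx(2) unfolding B_def glob_Es_def by auto
  have "x \<in> X"
    using pdom_subset[of "s\<^sup>\<star> \<cdot> s"] s by auto
  then have "k1 B = k2 B"
    using agree glob_i_eq_cls[OF sx(1)] unfolding B_def by auto
  then show ?thesis
    using k1 k2 s(1) B eta unfolding equivariant_def by (auto simp: glob_action_def)
qed

end

locale global_action_on = partial_action_on +
  assumes global: "global_action S X \<theta>"
begin

lemma
  assumes "s \<in> arr S" "t \<in> arr S" "dm S s = cd S t" "y \<in> pdom \<theta> (t\<^sup>\<star> \<cdot> s\<^sup>\<star>)"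
  shows pdom_mul_global: "y \<in> pdom \<theta> (t\<^sup>\<star>)" "pmap \<theta> t y \<in> pdom \<theta> (s\<^sup>\<star>)"
    and pmap_mul_global: "pmap \<theta> (s \<cdot> t) y = pmap \<theta> s (pmap \<theta> t y)"
proof -
  have "composable S s t"
    using assms unfolding composable_def by simp
  then have "{x \<in> pdom \<theta> (t\<^sup>\<star>). pmap \<theta> t x \<in> pdom \<theta> (s\<^sup>\<star>)} = pdom \<theta> ((s \<cdot> t)\<^sup>\<star>) \<and>
      (\<forall>x \<in> pdom \<theta> ((s \<cdot> t)\<^sup>\<star>). pmap \<theta> (s \<cdot> t) x = pmap \<theta> s (pmap \<theta> t x))"
    using global unfolding global_action_def by blast
  then show "y \<in> pdom \<theta> (t\<^sup>\<star>)" "pmap \<theta> t y \<in> pdom \<theta> (s\<^sup>\<star>)"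
      "pmap \<theta> (s \<cdot> t) y = pmap \<theta> s (pmap \<theta> t y)"
    using assms by auto
qed

lemma pdom_domain_idem_subset: "s \<in> arr S \<Longrightarrow> pdom \<theta> (s\<^sup>\<star> \<cdot> s) \<subseteq> pdom \<theta> (s\<^sup>\<star>)"
  using pdom_mul_global(1)[of "s\<^sup>\<star>" s] by auto

end

locale globalization_lift = partial_action_on S X \<theta> + target: global_action_on S F \<zeta>
  for S :: "('s, 'o, 'z) semigroupoid_scheme" and X :: "'x set" and \<theta> :: "('s, 'x) pact"
    and F :: "'f set" and \<zeta> :: "('s, 'f) pact" +
  fixes le :: "'x \<Rightarrow> 'x \<Rightarrow> bool" and leF :: "'f \<Rightarrow> 'f \<Rightarrow> bool" and j :: "'x \<Rightarrow> 'f"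
  assumes target_ordered: "ordered_partial_action S F leF \<zeta>"
    and j: "ordered_equivariant S X le \<theta> F leF \<zeta> j"
begin

definition glob_lift :: "('s \<times> 'x) set \<Rightarrow> 'f" where
  "glob_lift A = the_elem ((\<lambda>(s, x). pmap \<zeta> s (j x)) ` A)"

lemma j_in_pdom: "s \<in> arr S \<Longrightarrow> x \<in> pdom \<theta> s \<Longrightarrow> j x \<in> pdom \<zeta> s"
  and j_pmap: "s \<in> arr S \<Longrightarrow> x \<in> pdom \<theta> (s\<^sup>\<star>) \<Longrightarrow> j (pmap \<theta> s x) = pmap \<zeta> s (j x)"
  and j_mono: "x \<in> X \<Longrightarrow> y \<in> X \<Longrightarrow> le x y \<Longrightarrow> leF (j x) (j y)"
  using j unfolding ordered_equivariant_def equivariant_def by blast+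

lemma target_le_iff_pmap_le:
  "s \<in> arr S \<Longrightarrow> a \<in> pdom \<zeta> (s\<^sup>\<star>) \<Longrightarrow> b \<in> pdom \<zeta> (s\<^sup>\<star>) \<Longrightarrow>
    leF a b \<longleftrightarrow> leF (pmap \<zeta> s a) (pmap \<zeta> s b)"
  using target_ordered unfolding ordered_partial_action_def by blast

lemma j_in_pdom_sinv: "(s, x) \<in> glob_D S \<theta> \<Longrightarrow> j x \<in> pdom \<zeta> (s\<^sup>\<star>)"
  using j_in_pdom[of "s\<^sup>\<star> \<cdot> s" x] target.pdom_domain_idem_subset[of s] by (auto simp: glob_D_iff)

lemma pmap_j_eq_if_glob_sim:
  assumes "((s, x), (t, y)) \<in> glob_sim S \<theta>"
  shows "pmap \<zeta> s (j x) = pmap \<zeta> t (j y)"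
proof -
  have D: "(s, x) \<in> glob_D S \<theta>" "(t, y) \<in> glob_D S \<theta>" and A: "s \<in> arr S" "t \<in> arr S"
    using assms unfolding glob_sim_def by (auto simp: glob_D_iff)
  consider (R1) "composable S (t\<^sup>\<star>) s" "x \<in> pdom \<theta> (s\<^sup>\<star> \<cdot> t)" "pmap \<theta> (t\<^sup>\<star> \<cdot> s) x = y"
    | (R2) "s \<in> idems S" "t \<in> idems S" "x = y"
    using assms unfolding glob_sim_def by auto
  then show ?thesis
  proof cases
    case R1
    have st: "cd S s = cd S t"
      using R1 A unfolding composable_def by simp
    have jx: "j x \<in> pdom \<zeta> ((t\<^sup>\<star> \<cdot> s)\<^sup>\<star>)" and jy: "j y = pmap \<zeta> (t\<^sup>\<star> \<cdot> s) (j x)"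
      using j_in_pdom[of "s\<^sup>\<star> \<cdot> t" x] j_pmap[of "t\<^sup>\<star> \<cdot> s" x] R1 A st by simp_all
    have "pmap \<zeta> (t\<^sup>\<star> \<cdot> s) (j x) \<in> pdom \<zeta> (t\<^sup>\<star>)"
      using j_in_pdom_sinv[OF D(2)] jy by simp
    then have "j x \<in> pdom \<zeta> ((t\<^sup>\<star> \<cdot> s)\<^sup>\<star> \<cdot> t\<^sup>\<star>)"
        and t_jy: "pmap \<zeta> (t \<cdot> t\<^sup>\<star> \<cdot> s) (j x) = pmap \<zeta> t (j y)"
      using target.pdom_mul[of t "t\<^sup>\<star> \<cdot> s" "j x"] target.pmap_mul[of t "t\<^sup>\<star> \<cdot> s" "j x"] jx jy A st
      by simp_all
    then have "j x \<in> pdom \<zeta> (s\<^sup>\<star> \<cdot> (t \<cdot> t\<^sup>\<star>)\<^sup>\<star>)"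
      using A st by simp
    then have "pmap \<zeta> s (j x) \<in> pdom \<zeta> ((t \<cdot> t\<^sup>\<star>)\<^sup>\<star>)"
        and "pmap \<zeta> (t \<cdot> t\<^sup>\<star> \<cdot> s) (j x) = pmap \<zeta> (t \<cdot> t\<^sup>\<star>) (pmap \<zeta> s (j x))"
      using target.pdom_mul_global(2)[of "t \<cdot> t\<^sup>\<star>" s "j x"]
        target.pmap_mul_global[of "t \<cdot> t\<^sup>\<star>" s "j x"] A st by simp_all
    moreover have "(t \<cdot> t\<^sup>\<star>)\<^sup>\<star> = t \<cdot> t\<^sup>\<star>"
      using idem_sinv[OF mul_sinv_idem] A by simp
    ultimately show ?thesis
      using target.pmap_idem[OF mul_sinv_idem[of t]] t_jy A by simp
  next
    case R2
    have "x \<in> pdom \<theta> s" "y \<in> pdom \<theta> t"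
      using D R2 idem_sinv idemsD(3) by (auto simp: glob_D_iff)
    then show ?thesis
      using j_in_pdom target.pmap_idem R2 A by auto
  qed
qed

lemma pmap_j_eq_if_glob_approx:
  assumes "((s, x), (t, y)) \<in> glob_approx S \<theta>"
  shows "pmap \<zeta> s (j x) = pmap \<zeta> t (j y)"
proof -
  have "(a, b) \<in> (glob_sim S \<theta> \<union> (glob_sim S \<theta>)\<inverse>)\<^sup>* \<Longrightarrow>
      pmap \<zeta> (fst a) (j (snd a)) = pmap \<zeta> (fst b) (j (snd b))" for a b
  proof (induction rule: rtrancl_induct)
    case (step b c)
    then show ?case
      using pmap_j_eq_if_glob_sim by (cases b, cases c) auto
  qed simp
  then show ?thesis
    using assms unfolding glob_approx_def by fastforce
qed

lemma glob_lift_cls: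
  assumes "(s, x) \<in> glob_D S \<theta>" shows "glob_lift (glob_cls S \<theta> s x) = pmap \<zeta> s (j x)"
  unfolding glob_lift_def
proof (rule the_elem_image_unique)
  show "glob_cls S \<theta> s x \<noteq> {}"
    using assms equiv_class_self[OF equiv_glob_approx] unfolding glob_cls_def by blast
  show "(case b of (t, y) \<Rightarrow> pmap \<zeta> t (j y)) = pmap \<zeta> s (j x)" if "b \<in> glob_cls S \<theta> s x" for b
    using that pmap_j_eq_if_glob_approx unfolding glob_cls_def by (cases b) auto
qed

lemma glob_lift_in_pdom:
  assumes s: "s \<in> arr S" and A: "A \<in> glob_Es S \<theta> s"
  shows "glob_lift A \<in> pdom \<zeta> s"
proof -
  obtain p x where px: "(p, x) \<in> glob_Ds S \<theta> (s\<^sup>\<star>\<^sup>\<star>)" "A = glob_cls S \<theta> p x"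
    using A s unfolding glob_Es_def by auto
  then have p: "p \<in> arr S" "dm S (s\<^sup>\<star>) = cd S p" "x \<in> pdom \<theta> (p\<^sup>\<star> \<cdot> s \<cdot> s\<^sup>\<star> \<cdot> p)"
    using glob_Ds_sinv_iff[of "s\<^sup>\<star>" p x] s by auto
  then have "j x \<in> pdom \<zeta> ((s\<^sup>\<star> \<cdot> p)\<^sup>\<star> \<cdot> s\<^sup>\<star> \<cdot> p)"
    using j_in_pdom[of "p\<^sup>\<star> \<cdot> s \<cdot> s\<^sup>\<star> \<cdot> p"] s by simp
  then have "j x \<in> pdom \<zeta> (p\<^sup>\<star> \<cdot> s\<^sup>\<star>\<^sup>\<star>)"
    using target.pdom_domain_idem_subset[of "s\<^sup>\<star> \<cdot> p"] p s by auto
  then have "pmap \<zeta> p (j x) \<in> pdom \<zeta> (s\<^sup>\<star>\<^sup>\<star>)"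
    using target.pdom_mul_global(2)[of "s\<^sup>\<star>" p "j x"] p s by simp
  moreover have "(p, x) \<in> glob_D S \<theta>"
    using px(1) glob_Ds_subset_glob_D by blast
  ultimately show ?thesis
    using glob_lift_cls px(2) s by simp
qed

lemma glob_lift_in_carrier:
  assumes "A \<in> glob_E S \<theta>" shows "glob_lift A \<in> F"
proof -
  obtain s x where sx: "(s, x) \<in> glob_D S \<theta>" "A = glob_cls S \<theta> s x"
    using assms by (rule glob_E_cases)
  then have "s \<in> arr S"
    by (simp add: glob_D_iff)
  then have "pmap \<zeta> s (j x) \<in> F"
    using target.pmap_in_pdom j_in_pdom_sinv[OF sx(1)] target.pdom_subset by blast
  then show ?thesis
    using glob_lift_cls sx by simp
qed

lemma glob_lift_eta:
  assumes s: "s \<in> arr S" and A: "A \<in> glob_Es S \<theta> (s\<^sup>\<star>)"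
  shows "glob_lift (glob_eta S \<theta> s A) = pmap \<zeta> s (glob_lift A)"
proof -
  obtain p x where px: "(p, x) \<in> glob_Ds S \<theta> (s\<^sup>\<star>)" "A = glob_cls S \<theta> p x"
    using A unfolding glob_Es_def by auto
  then have p: "p \<in> arr S" "dm S s = cd S p" "x \<in> pdom \<theta> (p\<^sup>\<star> \<cdot> s\<^sup>\<star> \<cdot> s \<cdot> p)"
    using glob_Ds_sinv_iff[OF s] by auto
  then have spx: "(s \<cdot> p, x) \<in> glob_D S \<theta>"
    unfolding glob_D_iff using s by simp
  have "pmap \<zeta> (s \<cdot> p) (j x) = pmap \<zeta> s (pmap \<zeta> p (j x))"
    using target.pmap_mul_global[of s p "j x"] j_in_pdom_sinv[OF spx] p s by simp
  moreover have "(p, x) \<in> glob_D S \<theta>"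
    using px(1) glob_Ds_subset_glob_D by blast
  ultimately show ?thesis
    using glob_eta_cls[OF s px(1)] glob_lift_cls[OF spx] glob_lift_cls px(2) by simp
qed

lemma glob_lift_mono:
  assumes "glob_le S X le \<theta> A B" shows "leF (glob_lift A) (glob_lift B)"
proof -
  obtain s x t y r y' x' where
    cls: "A = glob_cls S \<theta> s x" "B = glob_cls S \<theta> t y"
    and ry': "(r, y') \<in> glob_D S \<theta>" "((r, y'), (t, y)) \<in> glob_approx S \<theta>"
    and rx': "((r, x'), (s, x)) \<in> glob_approx S \<theta>"
    and le: "x' \<in> X" "le x' y'"
    using assms unfolding glob_le_def by blast
  have rx'D: "(r, x') \<in> glob_D S \<theta>"
    using rx' equiv_type[OF equiv_glob_approx] by blast
  have "glob_lift A = pmap \<zeta> r (j x')" "glob_lift B = pmap \<zeta> r (j y')"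
    using glob_lift_cls rx'D ry' rx' glob_cls_eqI cls by metis+
  moreover have "y' \<in> X"
    using ry'(1) pdom_subset[of "r\<^sup>\<star> \<cdot> r"] by (auto simp: glob_D_iff)
  ultimately show ?thesis
    using j_mono[OF le(1) _ le(2)] target_le_iff_pmap_le j_in_pdom_sinv rx'D ry'(1)
    by (auto simp: glob_D_iff)
qed

lemma ordered_equivariant_glob_lift:
  "ordered_equivariant S (glob_E S \<theta>) (glob_le S X le \<theta>) (glob_action S \<theta>) F leF \<zeta> glob_lift"
  unfolding ordered_equivariant_def equivariant_def
  using glob_lift_in_carrier glob_lift_in_pdom glob_lift_eta glob_lift_mono
  by (auto simp: glob_action_def)

lemma glob_lift_glob_i:
  assumes "x \<in> X" shows "glob_lift (glob_i S \<theta> x) = j x"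
proof -
  obtain e where e: "e \<in> idems S" "x \<in> pdom \<theta> e"
    using exists_idem_pdom[OF assms] by blast
  then have "(e, x) \<in> glob_D S \<theta>"
    unfolding glob_D_iff using idem_sinv idemsD by simp
  moreover have "pmap \<zeta> e (j x) = j x"
    using target.pmap_idem j_in_pdom idemsD e by simp
  ultimately show ?thesis
    using glob_lift_cls glob_i_eq_cls idem_sinv idemsD e by (metis glob_D_iff)
qed

lemma globalization_universal:
  "\<exists>k. ordered_equivariant S (glob_E S \<theta>) (glob_le S X le \<theta>) (glob_action S \<theta>) F leF \<zeta> k \<and>
     (\<forall>x \<in> X. k (glob_i S \<theta> x) = j x) \<and>
     (\<forall>(s, x) \<in> glob_D S \<theta>. k (glob_cls S \<theta> s x) = pmap \<zeta> s (j x)) \<and>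
     (\<forall>k'. ordered_equivariant S (glob_E S \<theta>) (glob_le S X le \<theta>) (glob_action S \<theta>) F leF \<zeta> k' \<and>
        (\<forall>x \<in> X. k' (glob_i S \<theta> x) = j x) \<longrightarrow> (\<forall>A \<in> glob_E S \<theta>. k' A = k A))"
proof (intro exI conjI allI impI ballI; (elim conjE)?)
  show "ordered_equivariant S (glob_E S \<theta>) (glob_le S X le \<theta>) (glob_action S \<theta>) F leF \<zeta> glob_lift"
    by (rule ordered_equivariant_glob_lift)
  show "glob_lift (glob_i S \<theta> x) = j x" if "x \<in> X" for x
    using glob_lift_glob_i that .
  show "(case sx of (s, x) \<Rightarrow> glob_lift (glob_cls S \<theta> s x) = pmap \<zeta> s (j x))"
    if "sx \<in> glob_D S \<theta>" for sx
    using glob_lift_cls that by (cases sx) simp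
  show "k' A = glob_lift A"
    if "ordered_equivariant S (glob_E S \<theta>) (glob_le S X le \<theta>) (glob_action S \<theta>) F leF \<zeta> k'"
      and "\<forall>x \<in> X. k' (glob_i S \<theta> x) = j x" and "A \<in> glob_E S \<theta>" for k' A
    using equivariant_glob_E_eqI[of F \<zeta> k' glob_lift] that ordered_equivariant_glob_lift glob_lift_glob_i
    unfolding ordered_equivariant_def by auto
qed

end

theorem mainTheorem7:
  fixes S :: "('s, 'o) semigroupoid"
    and X :: "'x set" and le :: "'x \<Rightarrow> 'x \<Rightarrow> bool" and \<theta> :: "('s, 'x) pact"
  assumes "inverse_semigroupoid S"
    and "ordered_partial_action S X le \<theta>"
  shows "\<forall>(F :: 'f set) (leF :: 'f \<Rightarrow> 'f \<Rightarrow> bool) (\<zeta> :: ('s, 'f) pact) (j :: 'x \<Rightarrow> 'f).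
           ordered_global_action S F leF \<zeta> \<and> ordered_equivariant S X le \<theta> F leF \<zeta> j \<longrightarrow>
           (\<exists>k. ordered_equivariant S (glob_E S \<theta>) (glob_le S X le \<theta>) (glob_action S \<theta>) F leF \<zeta> k \<and>
                (\<forall>x \<in> X. k (glob_i S \<theta> x) = j x) \<and>
                (\<forall>(s, x) \<in> glob_D S \<theta>. k (glob_cls S \<theta> s x) = pmap \<zeta> s (j x)) \<and>
                (\<forall>k'. ordered_equivariant S (glob_E S \<theta>) (glob_le S X le \<theta>) (glob_action S \<theta>) F leF \<zeta> k' \<and>
                      (\<forall>x \<in> X. k' (glob_i S \<theta> x) = j x) \<longrightarrow> (\<forall>A \<in> glob_E S \<theta>. k' A = k A)))"
  using assms
  by (intro allI impI, elim conjE, intro globalization_lift.globalization_universal)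
    (unfold_locales, auto simp: ordered_global_action_def ordered_partial_action_def global_action_def)

end
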